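(* Let $G$ be a torsion abelian group and $\varphi\colon G\to G$ a surjective endomorphism that is positively expansive. Then there exists a finite subgroup $K\leq G$ such that for every finite subgroup $F\leq G$ there exists $m\in\mathbb N$ with $F\subseteq\varphi^mK$.
   Context: $\mathbb N=\{0,1,2,\dots\}$. An endomorphism $\varphi$ of an abelian group $G$ is positively expansive if there is a finite subgroup $S\leq G$ such that for every finite subgroup $F\leq G$ there is $n\in\mathbb N$ with $F\subseteq\sum_{k=0}^n\varphi^kS$. *)

theory Defs
  imports Main
begin

text \<open>Abelian groups are rendered as types of class ab_group_add (the whole type is G).\<close>

definition is_subgroup :: "'a::ab_group_add set \<Rightarrow> bool" where
  "is_subgroup H \<longleftrightarrow> 0 \<in> H \<and> (\<forall>x\<in>H. \<forall>y\<in>H. x + y \<in> H) \<and> (\<forall>x\<in>H. - x \<in> H)"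

definition is_endo :: "('a::ab_group_add \<Rightarrow> 'a) \<Rightarrow> bool" where
  "is_endo \<phi> \<longleftrightarrow> (\<forall>x y. \<phi> (x + y) = \<phi> x + \<phi> y)"

definition torsion_group :: "'a::ab_group_add set \<Rightarrow> bool" where
  "torsion_group G \<longleftrightarrow> (\<forall>x\<in>G. \<exists>n::nat. n > 0 \<and> (\<Sum>i<n. x) = 0)"

definition iter_sum :: "('a::ab_group_add \<Rightarrow> 'a) \<Rightarrow> 'a set \<Rightarrow> nat \<Rightarrow> 'a set" where
  "iter_sum \<phi> S n = {(\<Sum>k\<le>n. f k) | f. \<forall>k\<le>n. f k \<in> (\<phi> ^^ k) ` S}"

definition pos_expansive :: "('a::ab_group_add \<Rightarrow> 'a) \<Rightarrow> bool" where
  "pos_expansive \<phi> \<longleftrightarrow> (\<exists>S. finite S \<and> is_subgroup S \<and>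
     (\<forall>F. finite F \<and> is_subgroup F \<longrightarrow> (\<exists>n. F \<subseteq> iter_sum \<phi> S n)))"

end

theory Submission
  imports Defs "HOL-Library.FuncSet"
begin

text \<open>Let S be the finite subgroup witnessing expansiveness and S_n = S + \<phi> S + ... + \<phi>^n S.
  By surjectivity every s \<in> S is \<phi> q, and q lies in a finite (cyclic, by torsion) subgroup,
  hence in some S_n; as S is finite, S \<subseteq> \<phi> S_N for a single N. Then K = S_N satisfies
  K \<subseteq> \<phi> K, so the subgroups \<phi>^m K increase with m and S_m \<subseteq> \<phi>^m K. Every finite
  subgroup lies in some S_m, hence in \<phi>^m K.\<close>

lemma is_endo_zero: "is_endo \<phi> \<Longrightarrow> \<phi> 0 = 0"
  unfolding is_endo_def by (metis add_cancel_right_right add_0)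

lemma is_endo_minus: "is_endo \<phi> \<Longrightarrow> \<phi> (- x) = - \<phi> x"
  using is_endo_zero[of \<phi>] unfolding is_endo_def by (metis add.right_inverse add_eq_0_iff)

lemma is_endo_funpow: "is_endo \<phi> \<Longrightarrow> is_endo (\<phi> ^^ k)"
  by (induction k) (auto simp: is_endo_def)

lemma is_subgroup_image:
  assumes "is_endo \<phi>" and "is_subgroup H"
  shows "is_subgroup (\<phi> ` H)"
  unfolding is_subgroup_def
proof (intro conjI ballI)
  show "0 \<in> \<phi> ` H"
    using assms is_endo_zero unfolding is_subgroup_def by (metis image_eqI)
  fix x y assume "x \<in> \<phi> ` H" "y \<in> \<phi> ` H"
  then obtain a b where ab: "a \<in> H" "b \<in> H" "x = \<phi> a" "y = \<phi> b" by blast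
  have "x + y = \<phi> (a + b)" "- x = \<phi> (- a)"
    using assms(1) ab(3,4) is_endo_minus[OF assms(1)] unfolding is_endo_def by auto
  moreover have "a + b \<in> H" "- a \<in> H"
    using assms(2) ab(1,2) unfolding is_subgroup_def by auto
  ultimately show "x + y \<in> \<phi> ` H" and "- x \<in> \<phi> ` H" by auto
qed

lemma subgroup_sum_mem:
  assumes "is_subgroup H" and "finite A" and "\<And>k. k \<in> A \<Longrightarrow> f k \<in> H"
  shows "sum f A \<in> H"
  using assms(2,3) by (induction A rule: finite_induct) (use assms(1) in \<open>auto simp: is_subgroup_def\<close>)

definition multiples :: "'a::ab_group_add \<Rightarrow> 'a set" where
  "multiples p = range (\<lambda>k::nat. \<Sum>i<k. p)"

lemma sum_lessThan_const_add:
  "(\<Sum>i<a + b. p) = (\<Sum>i<a. p) + (\<Sum>i<b. p :: 'a::ab_group_add)" for a b :: nat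
  by (induction b) (simp_all add: algebra_simps)

lemma sum_lessThan_const_mult:
  fixes n q :: nat
  assumes "(\<Sum>i<n. p) = (0 :: 'a::ab_group_add)"
  shows "(\<Sum>i<n * q. p) = 0"
  using assms by (induction q) (simp_all add: sum_lessThan_const_add add.commute)

lemma sum_lessThan_const_mod:
  fixes n k :: nat
  assumes "(\<Sum>i<n. p) = (0 :: 'a::ab_group_add)"
  shows "(\<Sum>i<k. p) = (\<Sum>i<k mod n. p)"
  by (metis assms add_0 mult_div_mod_eq sum_lessThan_const_add sum_lessThan_const_mult)

lemma multiples_self: "p \<in> multiples p"
proof -
  have "(\<Sum>i<Suc 0. p) = p" by simp
  then show ?thesis unfolding multiples_def by (metis rangeI)
qed

lemma
  fixes n :: nat
  assumes "n > 0" and order: "(\<Sum>i<n. p) = (0 :: 'a::ab_group_add)"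
  shows finite_multiples: "finite (multiples p)"
    and is_subgroup_multiples: "is_subgroup (multiples p)"
proof -
  have "(\<Sum>i<k. p) \<in> (\<lambda>k. \<Sum>i<k. p) ` {..<n}" for k :: nat
    using sum_lessThan_const_mod[OF order, of k] \<open>n > 0\<close> by auto
  then have "multiples p \<subseteq> (\<lambda>k. \<Sum>i<k. p) ` {..<n}"
    unfolding multiples_def by blast
  then show "finite (multiples p)" using finite_subset by blast
  have add: "(\<Sum>i<k. p) + (\<Sum>i<l. p) \<in> multiples p" for k l :: nat
    unfolding multiples_def sum_lessThan_const_add[symmetric] by blast
  have neg: "- (\<Sum>i<k. p) \<in> multiples p" for k :: nat
  proof -
    have "(\<Sum>i<(n - 1) * k. p) + (\<Sum>i<k. p) = (\<Sum>i<n * k. p)"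
      using \<open>n > 0\<close> by (simp flip: sum_lessThan_const_add add: diff_mult_distrib)
    then have "- (\<Sum>i<k. p) = (\<Sum>i<(n - 1) * k. p)"
      using sum_lessThan_const_mult[OF order] by (metis add.commute neg_eq_iff_add_eq_0)
    then show ?thesis unfolding multiples_def by simp
  qed
  show "is_subgroup (multiples p)"
    unfolding is_subgroup_def
  proof (intro conjI ballI)
    show "0 \<in> multiples p"
      unfolding multiples_def by (metis lessThan_0 sum.empty rangeI)
    fix x y assume "x \<in> multiples p" "y \<in> multiples p"
    then obtain k l :: nat where "x = (\<Sum>i<k. p)" "y = (\<Sum>i<l. p)"
      unfolding multiples_def by blast
    then show "x + y \<in> multiples p" and "- x \<in> multiples p"
      using add neg by simp_all
  qed
qed

lemma torsion_finite_subgroup_containing: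
  fixes p :: "'a::ab_group_add"
  assumes "torsion_group (UNIV :: 'a set)"
  obtains C :: "'a set" where "finite C" "is_subgroup C" "p \<in> C"
  using assms finite_multiples is_subgroup_multiples multiples_self that
  unfolding torsion_group_def by (metis UNIV_I)

lemma iter_sum_memI:
  assumes "\<And>k. k \<le> n \<Longrightarrow> f k \<in> (\<phi> ^^ k) ` S"
  shows "(\<Sum>k\<le>n. f k) \<in> iter_sum \<phi> S n"
  using assms unfolding iter_sum_def by blast

lemma iter_sum_memE:
  assumes "x \<in> iter_sum \<phi> S n"
  obtains f where "x = (\<Sum>k\<le>n. f k)" and "\<And>k. k \<le> n \<Longrightarrow> f k \<in> (\<phi> ^^ k) ` S"
  using assms unfolding iter_sum_def by blast

lemma finite_iter_sum:
  assumes "finite S"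
  shows "finite (iter_sum \<phi> S n)"
proof -
  have "iter_sum \<phi> S n \<subseteq> (\<lambda>f. \<Sum>k\<le>n. f k) ` (\<Pi>\<^sub>E k\<in>{..n}. (\<phi> ^^ k) ` S)"
  proof
    fix x assume "x \<in> iter_sum \<phi> S n"
    then obtain f where "x = (\<Sum>k\<le>n. f k)" "\<And>k. k \<le> n \<Longrightarrow> f k \<in> (\<phi> ^^ k) ` S"
      using iter_sum_memE by blast
    then have "restrict f {..n} \<in> (\<Pi>\<^sub>E k\<in>{..n}. (\<phi> ^^ k) ` S)" "x = (\<Sum>k\<le>n. restrict f {..n} k)"
      by auto
    then show "x \<in> (\<lambda>f. \<Sum>k\<le>n. f k) ` (\<Pi>\<^sub>E k\<in>{..n}. (\<phi> ^^ k) ` S)" by blast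
  qed
  then show ?thesis
    using assms by (meson finite_PiE finite_atMost finite_imageI finite_subset)
qed

lemma iter_sum_subset_subgroup:
  assumes "is_subgroup H" and "\<And>k. k \<le> n \<Longrightarrow> (\<phi> ^^ k) ` S \<subseteq> H"
  shows "iter_sum \<phi> S n \<subseteq> H"
proof
  fix x assume "x \<in> iter_sum \<phi> S n"
  then obtain f where "x = (\<Sum>k\<le>n. f k)" "\<And>k. k \<le> n \<Longrightarrow> f k \<in> (\<phi> ^^ k) ` S"
    using iter_sum_memE by blast
  then show "x \<in> H"
    using assms(2) by (auto intro!: subgroup_sum_mem[OF assms(1) finite_atMost])
qed

lemma is_subgroup_iter_sum:
  assumes "is_endo \<phi>" and "is_subgroup S"
  shows "is_subgroup (iter_sum \<phi> S n)"
  unfolding is_subgroup_def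
proof (intro conjI ballI)
  have sub: "is_subgroup ((\<phi> ^^ k) ` S)" for k
    using is_subgroup_image[OF is_endo_funpow[OF assms(1)] assms(2)] .
  have "(\<Sum>k\<le>n. 0) \<in> iter_sum \<phi> S n"
    using sub unfolding is_subgroup_def by (intro iter_sum_memI) simp
  then show "0 \<in> iter_sum \<phi> S n" by simp
  fix x y assume "x \<in> iter_sum \<phi> S n" "y \<in> iter_sum \<phi> S n"
  obtain f where f: "x = (\<Sum>k\<le>n. f k)" "\<And>k. k \<le> n \<Longrightarrow> f k \<in> (\<phi> ^^ k) ` S"
    using \<open>x \<in> iter_sum \<phi> S n\<close> iter_sum_memE by blast
  obtain g where g: "y = (\<Sum>k\<le>n. g k)" "\<And>k. k \<le> n \<Longrightarrow> g k \<in> (\<phi> ^^ k) ` S"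
    using \<open>y \<in> iter_sum \<phi> S n\<close> iter_sum_memE by blast
  have "f k + g k \<in> (\<phi> ^^ k) ` S" "- f k \<in> (\<phi> ^^ k) ` S" if "k \<le> n" for k
    using f(2)[OF that] g(2)[OF that] sub[of k] unfolding is_subgroup_def by blast+
  then have "(\<Sum>k\<le>n. f k + g k) \<in> iter_sum \<phi> S n" "(\<Sum>k\<le>n. - f k) \<in> iter_sum \<phi> S n"
    by (simp_all add: iter_sum_memI)
  then show "x + y \<in> iter_sum \<phi> S n" and "- x \<in> iter_sum \<phi> S n"
    using f(1) g(1) by (simp_all add: sum.distrib sum_negf)
qed

lemma funpow_image_subset_iter_sum:
  assumes "is_endo \<phi>" and "is_subgroup S" and "j \<le> n"
  shows "(\<phi> ^^ j) ` S \<subseteq> iter_sum \<phi> S n"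
proof
  fix x assume x: "x \<in> (\<phi> ^^ j) ` S"
  have "0 \<in> (\<phi> ^^ k) ` S" for k
    using is_subgroup_image[OF is_endo_funpow[OF assms(1)] assms(2)] unfolding is_subgroup_def by blast
  then have "(\<Sum>k\<le>n. if k = j then x else 0) \<in> iter_sum \<phi> S n"
    using x by (intro iter_sum_memI) auto
  then show "x \<in> iter_sum \<phi> S n" using assms(3) by simp
qed

lemma iter_sum_mono:
  assumes "is_endo \<phi>" and "is_subgroup S" and "n \<le> m"
  shows "iter_sum \<phi> S n \<subseteq> iter_sum \<phi> S m"
proof (rule iter_sum_subset_subgroup)
  show "is_subgroup (iter_sum \<phi> S m)" using assms(1,2) by (rule is_subgroup_iter_sum)
  show "(\<phi> ^^ k) ` S \<subseteq> iter_sum \<phi> S m" if "k \<le> n" for k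
    using assms that by (intro funpow_image_subset_iter_sum) auto
qed

lemma funpow_image_mono:
  assumes "K \<subseteq> \<phi> ` K" and "j \<le> m"
  shows "(\<phi> ^^ j) ` K \<subseteq> (\<phi> ^^ m) ` K"
  using assms(2)
proof (induction m)
  case (Suc m)
  have "(\<phi> ^^ m) ` K \<subseteq> (\<phi> ^^ m) ` \<phi> ` K" using assms(1) by blast
  also have "\<dots> = (\<phi> ^^ Suc m) ` K" by (simp add: image_comp funpow_swap1)
  finally show ?case using Suc by (cases "j = Suc m") auto
qed simp

lemma subgroup_subset_image_iter_sum:
  assumes "is_endo \<phi>" and "surj \<phi>" and "finite S" and "is_subgroup S"
    and exhaust: "\<And>p. \<exists>n. p \<in> iter_sum \<phi> S n"
  obtains N where "S \<subseteq> \<phi> ` iter_sum \<phi> S N"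
proof -
  have "\<exists>n. s \<in> \<phi> ` iter_sum \<phi> S n" for s
    using exhaust \<open>surj \<phi>\<close> by (metis surjD image_eqI)
  then obtain n where n: "\<And>s. s \<in> \<phi> ` iter_sum \<phi> S (n s)" by metis
  have "S \<subseteq> \<phi> ` iter_sum \<phi> S (Max (n ` S))"
  proof
    fix s assume "s \<in> S"
    then have "iter_sum \<phi> S (n s) \<subseteq> iter_sum \<phi> S (Max (n ` S))"
      using assms(1,3,4) by (intro iter_sum_mono) auto
    then show "s \<in> \<phi> ` iter_sum \<phi> S (Max (n ` S))" using n by blast
  qed
  then show thesis using that by blast
qed

lemma iter_sum_subset_image_self:
  assumes "is_endo \<phi>" and "is_subgroup S" and "S \<subseteq> \<phi> ` iter_sum \<phi> S N"
  shows "iter_sum \<phi> S N \<subseteq> \<phi> ` iter_sum \<phi> S N"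
proof (rule iter_sum_subset_subgroup)
  show "is_subgroup (\<phi> ` iter_sum \<phi> S N)"
    using assms(1,2) by (intro is_subgroup_image is_subgroup_iter_sum)
  fix k assume "k \<le> N"
  show "(\<phi> ^^ k) ` S \<subseteq> \<phi> ` iter_sum \<phi> S N"
  proof (cases k)
    case (Suc j)
    then have "(\<phi> ^^ j) ` S \<subseteq> iter_sum \<phi> S N"
      using \<open>k \<le> N\<close> assms(1,2) by (intro funpow_image_subset_iter_sum) auto
    then show ?thesis using Suc by (auto simp: image_comp)
  qed (use assms(3) in simp)
qed

lemma iter_sum_subset_funpow_image:
  assumes "is_endo \<phi>" and "is_subgroup K" and "S \<subseteq> K" and "K \<subseteq> \<phi> ` K"
  shows "iter_sum \<phi> S m \<subseteq> (\<phi> ^^ m) ` K"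
proof (rule iter_sum_subset_subgroup)
  show "is_subgroup ((\<phi> ^^ m) ` K)"
    using assms(1,2) by (intro is_subgroup_image is_endo_funpow)
  fix k assume "k \<le> m"
  then show "(\<phi> ^^ k) ` S \<subseteq> (\<phi> ^^ m) ` K"
    using funpow_image_mono[OF assms(4)] assms(3) by blast
qed

theorem lemma4p1:
  fixes \<phi> :: "'a::ab_group_add \<Rightarrow> 'a"
  assumes "torsion_group (UNIV :: 'a set)"
    and "is_endo \<phi>"
    and "surj \<phi>"
    and "pos_expansive \<phi>"
  shows "\<exists>K. finite K \<and> is_subgroup K \<and>
           (\<forall>F. finite F \<and> is_subgroup F \<longrightarrow> (\<exists>m::nat. F \<subseteq> (\<phi> ^^ m) ` K))"
proof -
  obtain S where S: "finite S" "is_subgroup S"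
    and expand: "\<And>F. finite F \<Longrightarrow> is_subgroup F \<Longrightarrow> \<exists>n. F \<subseteq> iter_sum \<phi> S n"
    using assms(4) unfolding pos_expansive_def by blast
  have exhaust: "\<exists>n. p \<in> iter_sum \<phi> S n" for p
  proof -
    obtain C where "finite C" "is_subgroup C" "p \<in> C"
      using torsion_finite_subgroup_containing[OF assms(1)] .
    then show ?thesis using expand by blast
  qed
  obtain N where N: "S \<subseteq> \<phi> ` iter_sum \<phi> S N"
    using subgroup_subset_image_iter_sum[OF assms(2,3) S exhaust] .
  define K where "K = iter_sum \<phi> S N"
  have K: "finite K" "is_subgroup K" "S \<subseteq> K" "K \<subseteq> \<phi> ` K"
    unfolding K_def
    using finite_iter_sum[OF S(1)] is_subgroup_iter_sum[OF assms(2) S(2)]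
      funpow_image_subset_iter_sum[OF assms(2) S(2), of 0 N]
      iter_sum_subset_image_self[OF assms(2) S(2) N] by auto
  have "\<exists>m. F \<subseteq> (\<phi> ^^ m) ` K" if "finite F" "is_subgroup F" for F
    using expand[OF that] iter_sum_subset_funpow_image[OF assms(2) K(2-4)] by (meson order_trans)
  then show ?thesis using K(1,2) by (intro exI[of _ K]) simp
qed

end
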